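(* Let $\beta=(\pi_1,\pi_2)$ be a chainable pair of patterns, and let $\mathcal{M}^\beta$ be the set of complex matrices $\mathbf{A}$ of the same size as matrices in $\mathcal{B}^\beta$ such that $\operatorname{rank}(\mathbf{A}[R_P,C_P])\le r(\pi_1,\pi_2)$ for every $P\in\mathcal{P}(\mathbf{S}_{\pi_1},\mathbf{S}_{\pi_2})$. Then $$\mathcal{B}^\beta=\Sigma^{\pi_1*\pi_2}\cap\mathcal{M}^\beta.$$
   Context: A pattern is a tuple $\pi=(a,b,c,d)$ of positive integers; $\mathbf{S}_\pi:=\mathbf{I}_a\otimes\mathbf{1}_{b\times c}\otimes\mathbf{I}_d\in\{0,1\}^{abd\times acd}$. A $\pi$-factor is a complex $abd\times acd$ matrix with support in that of $\mathbf{S}_\pi$; $\Sigma^\pi$ is the set of $\pi$-factors. Patterns $\pi_1=(a_1,b_1,c_1,d_1),\pi_2=(a_2,b_2,c_2,d_2)$ are chainable if $a_1c_1/a_2=b_2d_2/d_1=:r(\pi_1,\pi_2)$ is an integer, $a_1\mid a_2$, $d_2\mid d_1$; then $\pi_1*\pi_2:=(a_1,b_1d_1/d_2,a_2c_2/a_1,d_2)$. $\mathcal{B}^\beta:=\{\mathbf{X}_1\mathbf{X}_2:\mathbf{X}_i\in\Sigma^{\pi_i}\}$. For binary $\mathbf{L}\in\{0,1\}^{m\times r},\mathbf{R}\in\{0,1\}^{r\times n}$ let $\mathbf{U}_i:=\mathbf{L}[:,i]\mathbf{R}[i,:]$; $\mathcal{P}(\mathbf{L},\mathbf{R})$ is the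 partition of $\{1,\dots,r\}$ into classes of $i\sim j\iff\mathbf{U}_i=\mathbf{U}_j$, and for a class $P$, $R_P\times C_P$ is the support of $\mathbf{U}_i$, $i\in P$. *)

theory Defs
  imports "Jordan_Normal_Form.DL_Rank_Submatrix"
begin

(* Indices are 0-based throughout. A pattern is a 4-tuple (a,b,c,d). *)
type_synonym pattern = "nat \<times> nat \<times> nat \<times> nat"

definition is_pattern :: "pattern \<Rightarrow> bool" where
  "is_pattern \<pi> = (case \<pi> of (a,b,c,d) \<Rightarrow> 0 < a \<and> 0 < b \<and> 0 < c \<and> 0 < d)"

definition kron :: "'a::times mat \<Rightarrow> 'a mat \<Rightarrow> 'a mat" where
  "kron A B = mat (dim_row A * dim_row B) (dim_col A * dim_col B)
     (\<lambda>(i,j). A $$ (i div dim_row B, j div dim_col B) * B $$ (i mod dim_row B, j mod dim_col B))"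

definition ones_mat :: "nat \<Rightarrow> nat \<Rightarrow> 'a::one mat" where
  "ones_mat b c = mat b c (\<lambda>_. 1)"

definition S_pat :: "pattern \<Rightarrow> complex mat" where
  "S_pat \<pi> = (case \<pi> of (a,b,c,d) \<Rightarrow> kron (kron (1\<^sub>m a) (ones_mat b c)) (1\<^sub>m d))"

definition factors :: "pattern \<Rightarrow> complex mat set" where
  "factors \<pi> = (case \<pi> of (a,b,c,d) \<Rightarrow>
     {X. X \<in> carrier_mat (a*b*d) (a*c*d) \<and>
         (\<forall>i<a*b*d. \<forall>j<a*c*d. S_pat \<pi> $$ (i,j) = 0 \<longrightarrow> X $$ (i,j) = 0)})"

definition chainable :: "pattern \<Rightarrow> pattern \<Rightarrow> bool" where
  "chainable \<pi>1 \<pi>2 = (case \<pi>1 of (a1,b1,c1,d1) \<Rightarrow> case \<pi>2 of (a2,b2,c2,d2) \<Rightarrow>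
     (\<exists>r::nat. a1 * c1 = r * a2 \<and> b2 * d2 = r * d1) \<and> a1 dvd a2 \<and> d2 dvd d1)"

(* r(pi1,pi2) = a1 c1 / a2 (meaningful when chainable) *)
definition rpat :: "pattern \<Rightarrow> pattern \<Rightarrow> nat" where
  "rpat \<pi>1 \<pi>2 = (case \<pi>1 of (a1,b1,c1,d1) \<Rightarrow> case \<pi>2 of (a2,b2,c2,d2) \<Rightarrow> a1 * c1 div a2)"

definition star_pat :: "pattern \<Rightarrow> pattern \<Rightarrow> pattern" where
  "star_pat \<pi>1 \<pi>2 = (case \<pi>1 of (a1,b1,c1,d1) \<Rightarrow> case \<pi>2 of (a2,b2,c2,d2) \<Rightarrow>
     (a1, b1 * d1 div d2, a2 * c2 div a1, d2))"

definition butterfly_set :: "pattern \<Rightarrow> pattern \<Rightarrow> complex mat set" where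
  "butterfly_set \<pi>1 \<pi>2 = {X1 * X2 | X1 X2. X1 \<in> factors \<pi>1 \<and> X2 \<in> factors \<pi>2}"

definition rank_one_comp :: "'a::comm_ring_1 mat \<Rightarrow> 'a mat \<Rightarrow> nat \<Rightarrow> 'a mat" where
  "rank_one_comp L R i = mat (dim_row L) (dim_col R) (\<lambda>(k,l). L $$ (k,i) * R $$ (i,l))"

definition comp_partition :: "'a::comm_ring_1 mat \<Rightarrow> 'a mat \<Rightarrow> nat set set" where
  "comp_partition L R = {0..<dim_col L} //
     {(i,j). i < dim_col L \<and> j < dim_col L \<and> rank_one_comp L R i = rank_one_comp L R j}"

definition mat_support :: "'a::zero mat \<Rightarrow> (nat \<times> nat) set" where
  "mat_support M = {(k,l). k < dim_row M \<and> l < dim_col M \<and> M $$ (k,l) \<noteq> 0}"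

definition class_rows :: "'a::comm_ring_1 mat \<Rightarrow> 'a mat \<Rightarrow> nat set \<Rightarrow> nat set" where
  "class_rows L R P = fst ` mat_support (rank_one_comp L R (SOME i. i \<in> P))"

definition class_cols :: "'a::comm_ring_1 mat \<Rightarrow> 'a mat \<Rightarrow> nat set \<Rightarrow> nat set" where
  "class_cols L R P = snd ` mat_support (rank_one_comp L R (SOME i. i \<in> P))"

definition mat_rank :: "complex mat \<Rightarrow> nat" where
  "mat_rank A = vec_space.rank (dim_row A) A"

definition M_set :: "pattern \<Rightarrow> pattern \<Rightarrow> complex mat set" where
  "M_set \<pi>1 \<pi>2 = (case \<pi>1 of (a1,b1,c1,d1) \<Rightarrow> case \<pi>2 of (a2,b2,c2,d2) \<Rightarrow>
     {A. A \<in> carrier_mat (a1*b1*d1) (a2*c2*d2) \<and>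
         (\<forall>P \<in> comp_partition (S_pat \<pi>1) (S_pat \<pi>2).
            mat_rank (submatrix A (class_rows (S_pat \<pi>1) (S_pat \<pi>2) P)
                                  (class_cols (S_pat \<pi>1) (S_pat \<pi>2) P)) \<le> rpat \<pi>1 \<pi>2)})"

end

theory Submission
  imports Defs
begin

text \<open>
  Write \<open>U\<^sub>i\<close> for the rank-one components of \<open>S\<^sub>\<pi>\<^sub>1 S\<^sub>\<pi>\<^sub>2\<close>. In a product \<open>X\<^sub>1 X\<^sub>2\<close> of factors the
  entry \<open>(x,y)\<close> only receives contributions from middle indices \<open>i\<close> with \<open>(x,y)\<close> in the support
  of \<open>U\<^sub>i\<close>. For a chainable pair these supports are pairwise equal or disjoint, every class
  \<open>P\<close> of equal components has exactly \<open>r(\<pi>\<^sub>1,\<pi>\<^sub>2)\<close> members, and together the supports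
  cover exactly the support of \<open>S\<^sub>\<pi>\<^sub>1\<^sub>*\<^sub>\<pi>\<^sub>2\<close>. Hence on the block \<open>R\<^sub>P \<times> C\<^sub>P\<close> the product
  is a sum of \<open>r\<close> rank-one matrices; conversely, a matrix with that support whose blocks
  have rank at most \<open>r\<close> is factored block by block, the \<open>r\<close> indices of \<open>P\<close> serving as
  the inner dimension of the factorization of the block of \<open>P\<close>.
\<close>

section \<open>Rank of submatrices\<close>

lemma rank_sum_rank_one_le:
  fixes f :: "nat \<Rightarrow> 'k \<Rightarrow> complex" and g :: "'k \<Rightarrow> nat \<Rightarrow> complex"
  assumes "finite K"
  shows "vec_space.rank m (mat m n (\<lambda>(x,y). \<Sum>k\<in>K. f x k * g k y)) \<le> card K"
  using assms
proof (induction K rule: finite_induct)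
  case empty
  have "mat m n (\<lambda>_. 0) = (0\<^sub>m m n :: complex mat)"
    by (rule eq_matI) auto
  then show ?case by (simp add: vec_space.rank_0I)
next
  case (insert k K)
  have split: "mat m n (\<lambda>(x,y). \<Sum>k\<in>insert k K. f x k * g k y)
      = mat m n (\<lambda>(x,y). f x k * g k y) + mat m n (\<lambda>(x,y). \<Sum>k\<in>K. f x k * g k y)"
    by (rule eq_matI) (use insert in auto)
  have "vec_space.rank m (mat m n (\<lambda>(x,y). f x k * g k y)) \<le> 1"
    by (rule vec_space.rank_le_1_product_entries[of _ m n "\<lambda>x. f x k" "g k"]) auto
  moreover have "vec_space.rank m (mat m n (\<lambda>(x,y). \<Sum>k\<in>insert k K. f x k * g k y))
      \<le> vec_space.rank m (mat m n (\<lambda>(x,y). f x k * g k y))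
        + vec_space.rank m (mat m n (\<lambda>(x,y). \<Sum>k\<in>K. f x k * g k y))"
    unfolding split by (rule vec_space.rank_subadditive) auto
  moreover have "card (insert k K) = card K + 1" using insert.hyps by simp
  ultimately show ?case using insert.IH by linarith
qed

lemma (in vec_space) rank_factorization:
  assumes A: "A \<in> carrier_mat n nc" and r: "rank A \<le> r"
  obtains L R where "L \<in> carrier_mat n r" "R \<in> carrier_mat r nc" "A = L * R"
proof -
  obtain S where max: "maximal S (\<lambda>T. T \<subseteq> set (cols A) \<and> lin_indpt T)"
    using maximal_exists[of "\<lambda>T. T \<subseteq> set (cols A) \<and> lin_indpt T" "card (set (cols A))" "{}"]
    by (meson List.finite_set card_mono empty_iff empty_subsetI finite_lin_indpt2 rev_finite_subset)
  have SU: "S \<subseteq> set (cols A)" and liS: "lin_indpt S"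
    using max unfolding maximal_def by auto
  have colsC: "set (cols A) \<subseteq> carrier_vec n" using A cols_dim by blast
  have finS: "finite S" using SU finite_subset by blast
  have SC: "S \<subseteq> carrier_vec n" using SU colsC by blast
  have inspan: "set (cols A) \<subseteq> span S"
  proof
    fix s assume s: "s \<in> set (cols A)"
    show "s \<in> span S"
    proof (rule ccontr)
      assume "s \<notin> span S"
      then have "lin_indpt (S \<union> {s})"
        by (meson SU liS colsC s lin_dep_iff_in_span rev_subsetD span_mem subset_trans)
      moreover have "s \<notin> S" using SC \<open>s \<notin> span S\<close> span_mem by auto
      ultimately show False
        using max s SU unfolding maximal_def by blast
    qed
  qed
  txt \<open>\<open>L\<close> lists a basis \<open>S\<close> of the column space, padded with zero columns; \<open>R\<close> holds
    the coordinates of the columns of \<open>A\<close> in that basis.\<close>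
  obtain ws where ws: "distinct ws" "set ws = S" using finite_distinct_list[OF finS] by metis
  define s where "s = length ws"
  have s_le: "s \<le> r" using rank_card_indpt[OF A max] r ws distinct_card s_def by metis
  have wsC: "set ws \<subseteq> carrier_vec n" using ws SC by simp
  have "\<exists>c. col A j = mat_of_cols n ws *\<^sub>v vec s c" if "j < nc" for j
  proof -
    have "col A j \<in> span_list ws"
      using that A inspan span_list_as_span[OF wsC] ws by (auto simp: cols_def)
    then obtain c where "col A j = lincomb_list c ws" unfolding span_list_def by auto
    also have "\<dots> = mat_of_cols n ws *\<^sub>v vec s c"
      unfolding s_def by (rule lincomb_list_as_mat_mult) (use wsC in auto)
    finally show ?thesis by blast
  qed
  then obtain cf where cf: "\<And>j. j < nc \<Longrightarrow> col A j = mat_of_cols n ws *\<^sub>v vec s (cf j)"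
    by metis
  define L where "L = mat n r (\<lambda>(i,q). if q < s then ws ! q $ i else 0)"
  define R where "R = mat r nc (\<lambda>(q,j). if q < s then cf j q else 0)"
  have "A = L * R"
  proof (rule eq_matI)
    fix i j assume "i < dim_row (L * R)" and "j < dim_col (L * R)"
    then have i: "i < n" and j: "j < nc" by (auto simp: L_def R_def)
    have "(L * R) $$ (i,j) = (\<Sum>q = 0..<r. if q < s then ws ! q $ i * cf j q else 0)"
      using i j by (auto simp: L_def R_def scalar_prod_def intro: sum.cong)
    also have "\<dots> = (\<Sum>q = 0..<s. ws ! q $ i * cf j q)"
      by (rule sum.mono_neutral_cong_right) (use s_le in auto)
    also have "\<dots> = (mat_of_cols n ws *\<^sub>v vec s (cf j)) $ i"
      using i by (simp add: mat_of_cols_def scalar_prod_def s_def)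
    also have "\<dots> = A $$ (i,j)" using cf[OF j] i j A by (metis carrier_matD(1) col_def index_vec)
    finally show "A $$ (i,j) = (L * R) $$ (i,j)" by simp
  qed (use A in \<open>auto simp: L_def R_def\<close>)
  moreover have "L \<in> carrier_mat n r" "R \<in> carrier_mat r nc" by (auto simp: L_def R_def)
  ultimately show ?thesis using that by blast
qed

lemma pick_bounded:
  assumes "u < card {a. a < n \<and> a \<in> I}"
  shows "pick I u \<in> I" "pick I u < n"
  using pick_reduce_set[OF assms] pick_in_set[of u "{a. a < n \<and> a \<in> I}"] assms by auto

lemma card_elems_below_less:
  fixes x n :: nat
  assumes "x \<in> I" "x < n"
  shows "card {a\<in>I. a < x} < card {a. a < n \<and> a \<in> I}"
proof (rule psubset_card_mono)
  have "x \<in> {a. a < n \<and> a \<in> I}" "x \<notin> {a\<in>I. a < x}" using assms by auto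
  then show "{a\<in>I. a < x} \<subset> {a. a < n \<and> a \<in> I}" using assms(2) by auto
qed simp

lemma mat_rank_submatrix_le_card:
  fixes A :: "complex mat"
  assumes "finite K"
    and "\<And>x y. x \<in> I \<Longrightarrow> y \<in> J \<Longrightarrow> x < dim_row A \<Longrightarrow> y < dim_col A \<Longrightarrow>
           A $$ (x,y) = (\<Sum>k\<in>K. f x k * g k y)"
  shows "mat_rank (submatrix A I J) \<le> card K"
proof -
  let ?B = "submatrix A I J"
  let ?C = "mat (dim_row ?B) (dim_col ?B) (\<lambda>(u,v). \<Sum>k\<in>K. f (pick I u) k * g k (pick J v))"
  have "?B = ?C"
    by (rule eq_matI) (simp_all add: dim_submatrix submatrix_index pick_bounded assms(2))
  then have "mat_rank ?B = vec_space.rank (dim_row ?B) ?C"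
    unfolding mat_rank_def by (rule arg_cong)
  also have "\<dots> \<le> card K"
    by (rule rank_sum_rank_one_le[OF assms(1)])
  finally show ?thesis .
qed

lemma mat_rank_submatrix_le_imp_factor:
  fixes A :: "complex mat"
  assumes "finite K" and "mat_rank (submatrix A I J) \<le> card K"
  shows "\<exists>f g. \<forall>x\<in>I. \<forall>y\<in>J. x < dim_row A \<longrightarrow> y < dim_col A \<longrightarrow>
           A $$ (x,y) = (\<Sum>k\<in>K. f x k * g k y)"
proof -
  let ?B = "submatrix A I J"
  obtain L R where L: "L \<in> carrier_mat (dim_row ?B) (card K)"
    and R: "R \<in> carrier_mat (card K) (dim_col ?B)" and B: "?B = L * R"
    using vec_space.rank_factorization[of ?B "dim_row ?B" "dim_col ?B" "card K"] assms(2)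
    unfolding mat_rank_def by auto
  obtain h where h: "bij_betw h K {0..<card K}"
    using ex_bij_betw_finite_nat[OF assms(1)] by blast
  define u where "u x = card {a\<in>I. a < x}" for x
  define v where "v y = card {a\<in>J. a < y}" for y
  have factor: "A $$ (x,y) = (\<Sum>k\<in>K. L $$ (u x, h k) * R $$ (h k, v y))"
    if "x \<in> I" "y \<in> J" "x < dim_row A" "y < dim_col A" for x y
  proof -
    have "u x < dim_row ?B" "v y < dim_col ?B"
      using that card_elems_below_less by (simp_all add: u_def v_def dim_submatrix)
    then have uv: "u x < dim_row L" "v y < dim_col R" using L R by auto
    have "A $$ (x,y) = ?B $$ (u x, v y)"
      using submatrix_index_card[OF that(3,4,1,2)] by (simp add: u_def v_def)
    also have "\<dots> = (\<Sum>q = 0..<card K. L $$ (u x, q) * R $$ (q, v y))"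
      unfolding B using uv L R by (simp add: scalar_prod_def)
    also have "\<dots> = (\<Sum>k\<in>K. L $$ (u x, h k) * R $$ (h k, v y))"
      by (rule sum.reindex_bij_betw[OF h, symmetric])
    finally show ?thesis .
  qed
  show ?thesis
  proof (intro exI ballI impI)
    fix x y assume "x \<in> I" "y \<in> J" "x < dim_row A" "y < dim_col A"
    then show "A $$ (x,y) = (\<Sum>k\<in>K. L $$ (u x, h k) * R $$ (h k, v y))" by (rule factor)
  qed
qed

section \<open>Classes of equal rank-one components\<close>

definition comp_class :: "'a::comm_ring_1 mat \<Rightarrow> 'a mat \<Rightarrow> nat \<Rightarrow> nat set" where
  "comp_class L R i = {j. j < dim_col L \<and> rank_one_comp L R i = rank_one_comp L R j}"

lemma comp_partition_eq_image: "comp_partition L R = comp_class L R ` {..<dim_col L}"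
proof -
  let ?E = "{(i,j). i < dim_col L \<and> j < dim_col L \<and> rank_one_comp L R i = rank_one_comp L R j}"
  have "(\<Union>i\<in>{0..<dim_col L}. {?E `` {i}}) = (\<Union>i\<in>{0..<dim_col L}. {comp_class L R i})"
    by (rule SUP_cong) (auto simp: comp_class_def)
  then show ?thesis
    unfolding comp_partition_def quotient_def UNION_singleton_eq_range atLeast0LessThan .
qed

lemma finite_comp_class: "finite (comp_class L R i)"
  unfolding comp_class_def by simp

lemma class_rows_cols_comp_class:
  assumes "i < dim_col L"
  shows "class_rows L R (comp_class L R i) = fst ` mat_support (rank_one_comp L R i)"
    and "class_cols L R (comp_class L R i) = snd ` mat_support (rank_one_comp L R i)"
proof -
  have "i \<in> comp_class L R i" using assms by (simp add: comp_class_def)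
  then have "(SOME j. j \<in> comp_class L R i) \<in> comp_class L R i" by (rule someI)
  then have "rank_one_comp L R (SOME j. j \<in> comp_class L R i) = rank_one_comp L R i"
    by (simp add: comp_class_def)
  then show "class_rows L R (comp_class L R i) = fst ` mat_support (rank_one_comp L R i)"
    and "class_cols L R (comp_class L R i) = snd ` mat_support (rank_one_comp L R i)"
    unfolding class_rows_def class_cols_def by simp_all
qed

lemma mat_support_rank_one_comp:
  fixes L R :: "'a::idom mat"
  shows "mat_support (rank_one_comp L R i)
    = {x. x < dim_row L \<and> L $$ (x,i) \<noteq> 0} \<times> {y. y < dim_col R \<and> R $$ (i,y) \<noteq> 0}"
  unfolding mat_support_def rank_one_comp_def by auto

definition disjoint_comp_supports :: "'a::comm_ring_1 mat \<Rightarrow> 'a mat \<Rightarrow> bool" where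
  "disjoint_comp_supports L R \<longleftrightarrow> (\<forall>i<dim_col L. \<forall>j<dim_col L.
     mat_support (rank_one_comp L R i) \<inter> mat_support (rank_one_comp L R j) \<noteq> {} \<longrightarrow>
     rank_one_comp L R i = rank_one_comp L R j)"

lemma comps_containing_eq_comp_class:
  assumes "disjoint_comp_supports L R" "i < dim_col L" "(x,y) \<in> mat_support (rank_one_comp L R i)"
  shows "{j. j < dim_col L \<and> (x,y) \<in> mat_support (rank_one_comp L R j)} = comp_class L R i"
  using assms unfolding disjoint_comp_supports_def comp_class_def by auto

section \<open>Products of matrices with prescribed supports\<close>

definition supported_mats :: "'a::zero mat \<Rightarrow> 'a mat set" where
  "supported_mats S = {X \<in> carrier_mat (dim_row S) (dim_col S).
     \<forall>x<dim_row S. \<forall>y<dim_col S. S $$ (x,y) = 0 \<longrightarrow> X $$ (x,y) = 0}"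

definition low_rank_on_classes :: "complex mat \<Rightarrow> complex mat \<Rightarrow> nat \<Rightarrow> complex mat set" where
  "low_rank_on_classes L R r = {A \<in> carrier_mat (dim_row L) (dim_col R).
     \<forall>P\<in>comp_partition L R. mat_rank (submatrix A (class_rows L R P) (class_cols L R P)) \<le> r}"

lemma index_mult_supported_mats:
  fixes L R X1 X2 :: "'a::idom mat"
  assumes X1: "X1 \<in> supported_mats L" and X2: "X2 \<in> supported_mats R"
    and LR: "dim_col L = dim_row R" and x: "x < dim_row L" and y: "y < dim_col R"
  shows "(X1 * X2) $$ (x,y) = (\<Sum>j | j < dim_col L \<and> (x,y) \<in> mat_support (rank_one_comp L R j).
           X1 $$ (x,j) * X2 $$ (j,y))"
proof -
  have "dim_row X1 = dim_row L" "dim_col X1 = dim_col L" "dim_row X2 = dim_row R" "dim_col X2 = dim_col R"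
    using X1 X2 by (auto simp: supported_mats_def)
  then have "(X1 * X2) $$ (x,y) = (\<Sum>j = 0..<dim_col L. X1 $$ (x,j) * X2 $$ (j,y))"
    using LR x y by (simp add: scalar_prod_def)
  also have "\<dots> = (\<Sum>j | j < dim_col L \<and> (x,y) \<in> mat_support (rank_one_comp L R j).
      X1 $$ (x,j) * X2 $$ (j,y))"
    by (rule sum.mono_neutral_right)
      (use X1 X2 LR x y in \<open>auto simp: supported_mats_def mat_support_rank_one_comp\<close>)
  finally show ?thesis .
qed

lemma index_mult_supported_mats_eq_0:
  fixes L R X1 X2 :: "'a::idom mat"
  assumes "X1 \<in> supported_mats L" "X2 \<in> supported_mats R"
    and "dim_col L = dim_row R" "x < dim_row L" "y < dim_col R"
    and "\<forall>j<dim_col L. (x,y) \<notin> mat_support (rank_one_comp L R j)"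
  shows "(X1 * X2) $$ (x,y) = 0"
proof -
  have none: "{j. j < dim_col L \<and> (x,y) \<in> mat_support (rank_one_comp L R j)} = {}"
    using assms(6) by blast
  have "(X1 * X2) $$ (x,y) = (\<Sum>j\<in>{j. j < dim_col L \<and> (x,y) \<in> mat_support (rank_one_comp L R j)}.
      X1 $$ (x,j) * X2 $$ (j,y))"
    by (rule index_mult_supported_mats[OF assms(1-5)])
  also have "\<dots> = 0" unfolding none by simp
  finally show ?thesis .
qed

lemma mult_mem_supported_mats:
  fixes L R S X1 X2 :: "'a::idom mat"
  assumes L: "L \<in> carrier_mat m n" and R: "R \<in> carrier_mat n p" and S: "S \<in> carrier_mat m p"
    and support: "(\<Union>j<n. mat_support (rank_one_comp L R j)) \<subseteq> mat_support S"
    and X1: "X1 \<in> supported_mats L" and X2: "X2 \<in> supported_mats R"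
  shows "X1 * X2 \<in> supported_mats S"
proof -
  have "X1 * X2 \<in> carrier_mat m p"
    using X1 X2 L R by (intro mult_carrier_mat) (auto simp: supported_mats_def)
  moreover
  have "(X1 * X2) $$ (x,y) = 0" if "x < m" "y < p" "S $$ (x,y) = 0" for x y
  proof -
    from that S have "(x,y) \<notin> mat_support S" by (simp add: mat_support_def)
    then have "\<forall>j<n. (x,y) \<notin> mat_support (rank_one_comp L R j)" using support by blast
    then show ?thesis by (intro index_mult_supported_mats_eq_0[OF X1 X2]) (use L R that in simp_all)
  qed
  ultimately show ?thesis using S by (simp add: supported_mats_def)
qed

lemma mult_mem_low_rank_on_classes:
  fixes L R X1 X2 :: "complex mat"
  assumes L: "L \<in> carrier_mat m n" and R: "R \<in> carrier_mat n p"
    and disjoint: "disjoint_comp_supports L R"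
    and card: "\<And>P. P \<in> comp_partition L R \<Longrightarrow> card P \<le> r"
    and X1: "X1 \<in> supported_mats L" and X2: "X2 \<in> supported_mats R"
  shows "X1 * X2 \<in> low_rank_on_classes L R r"
proof -
  have "X1 * X2 \<in> carrier_mat m p"
    using X1 X2 L R by (intro mult_carrier_mat) (auto simp: supported_mats_def)
  moreover
  have "mat_rank (submatrix (X1 * X2) (class_rows L R P) (class_cols L R P)) \<le> r"
    if P: "P \<in> comp_partition L R" for P
  proof -
    obtain i where i: "i < n" and Pi: "P = comp_class L R i"
      using P L by (auto simp: comp_partition_eq_image)
    have entries: "(X1 * X2) $$ (x,y) = (\<Sum>j\<in>P. X1 $$ (x,j) * X2 $$ (j,y))"
      if "x \<in> class_rows L R P" "y \<in> class_cols L R P" for x y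
    proof -
      have xy: "(x,y) \<in> mat_support (rank_one_comp L R i)"
        using that i L unfolding Pi class_rows_cols_comp_class[OF i[folded carrier_matD(2)[OF L]]]
        by (auto simp: mat_support_rank_one_comp split: if_splits)
      then have "x < m" "y < p" using L R by (auto simp: mat_support_def rank_one_comp_def)
      then show ?thesis
        using index_mult_supported_mats[OF X1 X2, of x y] L R
          comps_containing_eq_comp_class[OF disjoint i[folded carrier_matD(2)[OF L]] xy]
        unfolding Pi by simp
    qed
    have "mat_rank (submatrix (X1 * X2) (class_rows L R P) (class_cols L R P)) \<le> card P"
      by (rule mat_rank_submatrix_le_card, simp add: Pi finite_comp_class, rule entries)
    then show ?thesis using card[OF P] by simp
  qed
  ultimately show ?thesis using L R by (simp add: low_rank_on_classes_def)
qed

lemma low_rank_on_classes_factor: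
  fixes L R A :: "complex mat"
  assumes L: "L \<in> carrier_mat m n"
    and card: "\<And>P. P \<in> comp_partition L R \<Longrightarrow> r \<le> card P"
    and A: "A \<in> low_rank_on_classes L R r"
  obtains F G where "\<And>P x y. P \<in> comp_partition L R \<Longrightarrow> x \<in> class_rows L R P \<Longrightarrow>
      y \<in> class_cols L R P \<Longrightarrow> x < dim_row A \<Longrightarrow> y < dim_col A \<Longrightarrow>
      A $$ (x,y) = (\<Sum>j\<in>P. F P x j * G P j y)"
proof -
  have "\<forall>P\<in>comp_partition L R. \<exists>f g. \<forall>x\<in>class_rows L R P. \<forall>y\<in>class_cols L R P.
          x < dim_row A \<longrightarrow> y < dim_col A \<longrightarrow> A $$ (x,y) = (\<Sum>j\<in>P. f x j * g j y)"
  proof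
    fix P assume P: "P \<in> comp_partition L R"
    then have "finite P" using L by (auto simp: comp_partition_eq_image finite_comp_class)
    moreover have "mat_rank (submatrix A (class_rows L R P) (class_cols L R P)) \<le> card P"
      using A P card[OF P] by (auto simp: low_rank_on_classes_def)
    ultimately show "\<exists>f g. \<forall>x\<in>class_rows L R P. \<forall>y\<in>class_cols L R P.
          x < dim_row A \<longrightarrow> y < dim_col A \<longrightarrow> A $$ (x,y) = (\<Sum>j\<in>P. f x j * g j y)"
      by (rule mat_rank_submatrix_le_imp_factor)
  qed
  then obtain F where "\<forall>P\<in>comp_partition L R. \<exists>g. \<forall>x\<in>class_rows L R P. \<forall>y\<in>class_cols L R P.
      x < dim_row A \<longrightarrow> y < dim_col A \<longrightarrow> A $$ (x,y) = (\<Sum>j\<in>P. F P x j * g j y)"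
    by (rule bchoice[elim_format]) blast
  then obtain G where "\<forall>P\<in>comp_partition L R. \<forall>x\<in>class_rows L R P. \<forall>y\<in>class_cols L R P.
      x < dim_row A \<longrightarrow> y < dim_col A \<longrightarrow> A $$ (x,y) = (\<Sum>j\<in>P. F P x j * G P j y)"
    by (rule bchoice[elim_format]) blast
  then show ?thesis using that by blast
qed

lemma supported_low_rank_factor:
  fixes L R S A :: "complex mat"
  assumes L: "L \<in> carrier_mat m n" and R: "R \<in> carrier_mat n p" and S: "S \<in> carrier_mat m p"
    and support: "mat_support S \<subseteq> (\<Union>j<n. mat_support (rank_one_comp L R j))"
    and disjoint: "disjoint_comp_supports L R"
    and card: "\<And>P. P \<in> comp_partition L R \<Longrightarrow> r \<le> card P"
    and A: "A \<in> supported_mats S \<inter> low_rank_on_classes L R r"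
  obtains X1 X2 where "X1 \<in> supported_mats L" "X2 \<in> supported_mats R" "A = X1 * X2"
proof -
  let ?U = "rank_one_comp L R"
  have AC: "A \<in> carrier_mat m p" using A S by (simp add: supported_mats_def)
  obtain F G where FG: "\<And>P x y. P \<in> comp_partition L R \<Longrightarrow> x \<in> class_rows L R P \<Longrightarrow>
      y \<in> class_cols L R P \<Longrightarrow> x < dim_row A \<Longrightarrow> y < dim_col A \<Longrightarrow>
      A $$ (x,y) = (\<Sum>j\<in>P. F P x j * G P j y)"
    using low_rank_on_classes_factor[OF L card] A by blast
  define X1 where "X1 = mat m n (\<lambda>(x,j). if L $$ (x,j) = 0 then 0 else F (comp_class L R j) x j)"
  define X2 where "X2 = mat n p (\<lambda>(j,y). if R $$ (j,y) = 0 then 0 else G (comp_class L R j) j y)"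
  have X1: "X1 \<in> supported_mats L" and X2: "X2 \<in> supported_mats R"
    using L R by (auto simp: supported_mats_def X1_def X2_def)
  have "A = X1 * X2"
  proof (rule eq_matI)
    fix x y assume "x < dim_row (X1 * X2)" "y < dim_col (X1 * X2)"
    then have x: "x < m" and y: "y < p" by (simp_all add: X1_def X2_def)
    show "A $$ (x,y) = (X1 * X2) $$ (x,y)"
    proof (cases "\<exists>i<n. (x,y) \<in> mat_support (?U i)")
      case True
      then obtain i where i: "i < n" and xy: "(x,y) \<in> mat_support (?U i)" by blast
      let ?P = "comp_class L R i"
      have "(X1 * X2) $$ (x,y) = (\<Sum>j\<in>?P. X1 $$ (x,j) * X2 $$ (j,y))"
        using index_mult_supported_mats[OF X1 X2, of x y] x y L R
          comps_containing_eq_comp_class[OF disjoint i[folded carrier_matD(2)[OF L]] xy]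
        by simp
      also have "\<dots> = (\<Sum>j\<in>?P. F ?P x j * G ?P j y)"
      proof (rule sum.cong)
        fix j assume j: "j \<in> ?P"
        then have "comp_class L R j = ?P" "?U j = ?U i" "j < n"
          using L by (auto simp: comp_class_def)
        moreover from this(2) xy have "(x,y) \<in> mat_support (?U j)" by simp
        then have "L $$ (x,j) \<noteq> 0" "R $$ (j,y) \<noteq> 0"
          by (simp_all add: mat_support_rank_one_comp)
        ultimately show "X1 $$ (x,j) * X2 $$ (j,y) = F ?P x j * G ?P j y"
          using x y by (simp add: X1_def X2_def)
      qed simp
      also have "\<dots> = A $$ (x,y)"
      proof -
        have "?P \<in> comp_partition L R" using i L by (simp add: comp_partition_eq_image)
        moreover have "x \<in> class_rows L R ?P" "y \<in> class_cols L R ?P"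
          using xy i L by (auto simp: class_rows_cols_comp_class intro: rev_image_eqI)
        ultimately show ?thesis
          by (intro FG[symmetric]) (use x y AC in auto)
      qed
      finally show ?thesis by simp
    next
      case False
      then have "(x,y) \<notin> mat_support S" using support by blast
      then have "A $$ (x,y) = 0" using A S x y by (auto simp: supported_mats_def mat_support_def)
      moreover have "(X1 * X2) $$ (x,y) = 0"
        using index_mult_supported_mats_eq_0[OF X1 X2] False x y L R by simp
      ultimately show ?thesis by simp
    qed
  qed (use AC in \<open>simp_all add: X1_def X2_def\<close>)
  with X1 X2 show ?thesis using that by blast
qed

theorem products_eq_supported_low_rank:
  fixes L R S :: "complex mat"
  assumes L: "L \<in> carrier_mat m n" and R: "R \<in> carrier_mat n p" and S: "S \<in> carrier_mat m p"
    and support: "mat_support S = (\<Union>j<n. mat_support (rank_one_comp L R j))"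
    and disjoint: "disjoint_comp_supports L R"
    and card: "\<And>P. P \<in> comp_partition L R \<Longrightarrow> card P = r"
  shows "{X1 * X2 | X1 X2. X1 \<in> supported_mats L \<and> X2 \<in> supported_mats R}
    = supported_mats S \<inter> low_rank_on_classes L R r"
proof (intro equalityI subsetI)
  fix A assume "A \<in> {X1 * X2 | X1 X2. X1 \<in> supported_mats L \<and> X2 \<in> supported_mats R}"
  then obtain X1 X2 where "A = X1 * X2" "X1 \<in> supported_mats L" "X2 \<in> supported_mats R"
    by blast
  then show "A \<in> supported_mats S \<inter> low_rank_on_classes L R r"
    using mult_mem_supported_mats[OF L R S] mult_mem_low_rank_on_classes[OF L R disjoint]
      support card by simp
next
  fix A assume A: "A \<in> supported_mats S \<inter> low_rank_on_classes L R r"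
  have "r \<le> card P" if "P \<in> comp_partition L R" for P using card[OF that] by simp
  then obtain X1 X2 where "X1 \<in> supported_mats L" "X2 \<in> supported_mats R" "A = X1 * X2"
    by (rule supported_low_rank_factor[OF L R S equalityD1[OF support] disjoint _ A])
  then show "A \<in> {X1 * X2 | X1 X2. X1 \<in> supported_mats L \<and> X2 \<in> supported_mats R}"
    by blast
qed

section \<open>Patterns\<close>

lemma dim_kron [simp]:
  "dim_row (kron A B) = dim_row A * dim_row B" "dim_col (kron A B) = dim_col A * dim_col B"
  unfolding kron_def by simp_all

lemma index_kron:
  assumes "i < dim_row A * dim_row B" "j < dim_col A * dim_col B"
  shows "kron A B $$ (i,j)
    = A $$ (i div dim_row B, j div dim_col B) * B $$ (i mod dim_row B, j mod dim_col B)"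
  using assms unfolding kron_def by simp

lemma dim_S_pat [simp]:
  "dim_row (S_pat (a,b,c,d)) = a*b*d" "dim_col (S_pat (a,b,c,d)) = a*c*d"
  unfolding S_pat_def ones_mat_def by simp_all

lemma S_pat_index:
  assumes x: "x < a*b*d" and y: "y < a*c*d"
  shows "S_pat (a,b,c,d) $$ (x,y)
    = (if x div (b*d) = y div (c*d) \<and> x mod d = y mod d then 1 else 0)"
proof -
  have pos: "0 < b" "0 < c" "0 < d" using x y by (auto intro!: gr0I)
  have xd: "x div d < a*b" and yd: "y div d < a*c"
    using x y pos by (simp_all add: div_less_iff_less_mult)
  then have "x div d div b < a" "y div d div c < a"
    using pos by (simp_all add: div_less_iff_less_mult mult.commute)
  then have "kron (1\<^sub>m a) (ones_mat b c) $$ (x div d, y div d)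
      = (if x div d div b = y div d div c then 1 else (0::complex))"
    using xd yd pos by (simp add: index_kron ones_mat_def)
  moreover have "S_pat (a,b,c,d) $$ (x,y)
      = kron (1\<^sub>m a) (ones_mat b c) $$ (x div d, y div d) * (1\<^sub>m d :: complex mat) $$ (x mod d, y mod d)"
    unfolding S_pat_def using x y by (simp add: index_kron ones_mat_def)
  moreover have "x div (b*d) = x div d div b" "y div (c*d) = y div d div c"
    by (metis div_mult2_eq mult.commute)+
  ultimately show ?thesis using pos by simp
qed

lemma factors_eq_supported_mats: "factors \<pi> = supported_mats (S_pat \<pi>)"
  by (cases \<pi>) (auto simp: factors_def supported_mats_def)

lemma M_set_eq_low_rank_on_classes:
  "M_set \<pi>1 \<pi>2 = low_rank_on_classes (S_pat \<pi>1) (S_pat \<pi>2) (rpat \<pi>1 \<pi>2)"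
  by (cases \<pi>1; cases \<pi>2) (simp add: M_set_def low_rank_on_classes_def)

section \<open>Chainable patterns\<close>

lemma chainable_normal_form:
  assumes "is_pattern \<pi>1" "is_pattern \<pi>2" "chainable \<pi>1 \<pi>2"
  obtains a b c d k r m where "0 < a" "0 < b" "0 < c" "0 < d" "0 < k" "0 < r" "0 < m"
    and "\<pi>1 = (a, b, r*k, m*d)" and "\<pi>2 = (a*k, r*m, c, d)"
proof -
  obtain a1 b1 c1 d1 a2 b2 c2 d2 where p: "\<pi>1 = (a1,b1,c1,d1)" "\<pi>2 = (a2,b2,c2,d2)"
    by (cases \<pi>1, cases \<pi>2) auto
  have pos: "0 < a1" "0 < b1" "0 < c1" "0 < d1" "0 < a2" "0 < b2" "0 < c2" "0 < d2"
    using assms(1,2) unfolding p is_pattern_def by auto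
  obtain r where r: "a1 * c1 = r * a2" "b2 * d2 = r * d1" and "a1 dvd a2" "d2 dvd d1"
    using assms(3) unfolding p chainable_def by auto
  then obtain k m where k: "a2 = a1 * k" and m: "d1 = m * d2"
    by (metis dvd_def mult.commute)
  have "0 < k" "0 < m" "0 < r" using pos k m r by auto
  moreover have "c1 = r * k" using r(1) pos(1) unfolding k by (simp add: ac_simps)
  moreover have "b2 = r * m" using r(2) pos(8) unfolding m by (simp add: ac_simps)
  ultimately show ?thesis using that pos unfolding p k m by simp
qed

lemma mult_add_less_mult:
  fixes q r \<delta> M :: nat
  assumes "q < r" "\<delta> < M"
  shows "q*M + \<delta> < r*M"
proof -
  have "Suc q * M \<le> r * M" using assms(1) by (intro mult_le_mono1) simp
  then show ?thesis using assms(2) by simp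
qed

lemma mult_add_div_mod_eq:
  fixes q M \<delta> :: nat
  assumes "\<delta> < M"
  shows "(q*M + \<delta>) div M = q" "(q*M + \<delta>) mod M = \<delta>"
  using assms by auto

lemma bij_betw_mixed_radix_digit:
  fixes \<alpha> \<delta> A M r :: nat
  assumes \<alpha>: "\<alpha> < A" and \<delta>: "\<delta> < M"
  shows "bij_betw (\<lambda>q. \<alpha>*(r*M) + q*M + \<delta>) {..<r}
    {j. j < A*(r*M) \<and> j div (r*M) = \<alpha> \<and> j mod M = \<delta>}"
proof (rule bij_betw_imageI)
  show "inj_on (\<lambda>q. \<alpha>*(r*M) + q*M + \<delta>) {..<r}"
    using \<delta> by (auto intro!: inj_onI)
  show "(\<lambda>q. \<alpha>*(r*M) + q*M + \<delta>) ` {..<r} = {j. j < A*(r*M) \<and> j div (r*M) = \<alpha> \<and> j mod M = \<delta>}"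
  proof (intro equalityI subsetI)
    fix j assume "j \<in> (\<lambda>q. \<alpha>*(r*M) + q*M + \<delta>) ` {..<r}"
    then obtain q where q: "q < r" and j: "j = \<alpha>*(r*M) + (q*M + \<delta>)" by auto
    have digit: "q*M + \<delta> < r*M" using q \<delta> by (rule mult_add_less_mult)
    have "j < A*(r*M)" unfolding j using \<alpha> digit by (rule mult_add_less_mult)
    moreover have "j div (r*M) = \<alpha>" unfolding j using digit q \<delta> by (subst div_mult_self3) auto
    moreover have "j mod M = \<delta>" unfolding j using \<delta> by (simp add: mult.assoc[symmetric])
    ultimately show "j \<in> {j. j < A*(r*M) \<and> j div (r*M) = \<alpha> \<and> j mod M = \<delta>}" by simp
  next
    fix j assume "j \<in> {j. j < A*(r*M) \<and> j div (r*M) = \<alpha> \<and> j mod M = \<delta>}"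
    then have j: "j div (r*M) = \<alpha>" "j mod M = \<delta>" and "j < A*(r*M)" by auto
    then have "0 < r" by (cases "r = 0") auto
    have "j = j div (r*M) * (r*M) + j mod (r*M)" by (rule div_mult_mod_eq[symmetric])
    also have "j mod (r*M) = j div M mod r * M + j mod M"
      using mod_mult2_eq[of j M r] by (simp add: ac_simps)
    finally have "j = \<alpha>*(r*M) + j div M mod r * M + \<delta>" using j by simp
    moreover have "j div M mod r < r" using \<open>0 < r\<close> by simp
    ultimately show "j \<in> (\<lambda>q. \<alpha>*(r*M) + q*M + \<delta>) ` {..<r}" by blast
  qed
qed

locale chained_patterns =
  fixes a b c d k r m :: nat
  assumes pos: "0 < a" "0 < b" "0 < c" "0 < d" "0 < k" "0 < r" "0 < m"
begin

abbreviation S1 :: "complex mat" where "S1 \<equiv> S_pat (a, b, r*k, m*d)"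
abbreviation S2 :: "complex mat" where "S2 \<equiv> S_pat (a*k, r*m, c, d)"
abbreviation inner :: nat where "inner \<equiv> a*k*(r*(m*d))"

text \<open>
  The middle index \<open>j\<close> enters column \<open>j\<close> of \<open>S1\<close> and row \<open>j\<close> of \<open>S2\<close> only through
  \<open>key j\<close>; the map \<open>key\<close> is \<open>r\<close>-to-one onto \<open>{..<a*k} \<times> {..<m*d}\<close>, and the support of
  \<open>U\<^sub>j\<close> determines \<open>key j\<close>.
\<close>

definition key :: "nat \<Rightarrow> nat \<times> nat" where
  "key j = (j div (r*(m*d)), j mod (m*d))"

definition key_rows :: "nat \<times> nat \<Rightarrow> nat set" where
  "key_rows t = {x. x < a*b*(m*d) \<and> x div (b*(m*d)) = fst t div k \<and> x mod (m*d) = snd t}"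

definition key_cols :: "nat \<times> nat \<Rightarrow> nat set" where
  "key_cols t = {y. y < a*k*c*d \<and> y div (c*d) = fst t \<and> y mod d = snd t mod d}"

lemma inner_eq: "a*(r*k)*(m*d) = inner" "a*k*(r*m)*d = inner"
  by (simp_all only: mult_ac)

lemma S1_carrier: "S1 \<in> carrier_mat (a*b*(m*d)) inner"
  by (intro carrier_matI) (simp_all only: dim_S_pat inner_eq)

lemma dim_col_S1: "dim_col S1 = inner"
  by (simp only: dim_S_pat inner_eq)

lemma S2_carrier: "S2 \<in> carrier_mat inner (a*k*c*d)"
  by (intro carrier_matI) (simp_all only: dim_S_pat inner_eq)

lemma S1_index:
  assumes "x < a*b*(m*d)" "j < inner"
  shows "S1 $$ (x,j) = (if x \<in> key_rows (key j) then 1 else 0)"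
proof -
  have "S1 $$ (x,j)
      = (if x div (b*(m*d)) = j div (r*k*(m*d)) \<and> x mod (m*d) = j mod (m*d) then 1 else 0)"
    using assms by (intro S_pat_index) (simp_all only: inner_eq)
  moreover have "j div (r*k*(m*d)) = j div (r*(m*d)) div k"
    by (metis div_mult2_eq mult.commute mult.left_commute)
  ultimately show ?thesis using assms(1) by (simp add: key_rows_def key_def)
qed

lemma S2_index:
  assumes "j < inner" "y < a*k*c*d"
  shows "S2 $$ (j,y) = (if y \<in> key_cols (key j) then 1 else 0)"
proof -
  have "S2 $$ (j,y) = (if j div (r*m*d) = y div (c*d) \<and> j mod d = y mod d then 1 else 0)"
    using assms by (intro S_pat_index) (simp_all only: inner_eq)
  moreover have "r*m*d = r*(m*d)" by (rule mult.assoc)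
  moreover have "j mod (m*d) mod d = j mod d" by (simp add: mod_mod_cancel)
  ultimately show ?thesis using assms(2) by (auto simp: key_cols_def key_def)
qed

lemma mat_support_rank_one_comp_key:
  assumes "j < inner"
  shows "mat_support (rank_one_comp S1 S2 j) = key_rows (key j) \<times> key_cols (key j)"
  using assms S1_carrier S2_carrier
  by (auto simp: mat_support_rank_one_comp S1_index S2_index key_rows_def key_cols_def split: if_splits)

lemma key_eq_if_mem:
  assumes "x \<in> key_rows t" "y \<in> key_cols t"
  shows "t = (y div (c*d), x mod (m*d))"
  using assms by (cases t) (simp add: key_rows_def key_cols_def)

lemma key_in_range:
  assumes "j < inner"
  shows "key j \<in> {..<a*k} \<times> {..<m*d}"
  using assms pos by (simp add: key_def div_less_iff_less_mult)

lemma key_rows_nonempty: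
  assumes "t \<in> {..<a*k} \<times> {..<m*d}"
  shows "key_rows t \<noteq> {}"
proof -
  obtain \<alpha> \<delta> where t: "t = (\<alpha>, \<delta>)" and \<alpha>: "\<alpha> < a*k" and \<delta>: "\<delta> < m*d"
    using assms by auto
  let ?x = "\<alpha> div k * (b*(m*d)) + \<delta>"
  have "m*d \<le> b*(m*d)" using pos(2) by simp
  then have \<delta>': "\<delta> < b*(m*d)" using \<delta> by linarith
  have "\<alpha> div k < a" using \<alpha> pos by (simp add: div_less_iff_less_mult)
  then have "?x < a*(b*(m*d))" using \<delta>' by (rule mult_add_less_mult)
  moreover have "?x div (b*(m*d)) = \<alpha> div k" using \<delta>' by (rule mult_add_div_mod_eq)
  moreover have "?x mod (m*d) = \<delta>"
    using mult_add_div_mod_eq(2)[OF \<delta>, of "\<alpha> div k * b"] by (simp only: mult.assoc)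
  ultimately have "?x \<in> key_rows t"
    unfolding key_rows_def t fst_conv snd_conv mem_Collect_eq mult.assoc by blast
  then show ?thesis by blast
qed

lemma key_cols_nonempty:
  assumes "t \<in> {..<a*k} \<times> {..<m*d}"
  shows "key_cols t \<noteq> {}"
proof -
  obtain \<alpha> \<delta> where t: "t = (\<alpha>, \<delta>)" and \<alpha>: "\<alpha> < a*k"
    using assms by auto
  let ?y = "\<alpha> * (c*d) + \<delta> mod d"
  have "\<delta> mod d < d" using pos(4) by simp
  moreover have "d \<le> c*d" using pos(3) by simp
  ultimately have \<delta>': "\<delta> mod d < c*d" by linarith
  have "?y < a*k*(c*d)" using \<alpha> \<delta>' by (rule mult_add_less_mult)
  moreover have "?y div (c*d) = \<alpha>" using \<delta>' by (rule mult_add_div_mod_eq)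
  moreover have "?y mod d = \<delta> mod d"
    using mult_add_div_mod_eq(2)[OF \<open>\<delta> mod d < d\<close>, of "\<alpha> * c"] by (simp only: mult.assoc)
  ultimately have "?y \<in> key_cols t"
    unfolding key_cols_def t fst_conv snd_conv mem_Collect_eq mult.assoc by blast
  then show ?thesis by blast
qed

lemma card_key_fibre:
  assumes "t \<in> {..<a*k} \<times> {..<m*d}"
  shows "card {j. j < inner \<and> key j = t} = r"
proof -
  obtain \<alpha> \<delta> where t: "t = (\<alpha>, \<delta>)" and \<alpha>: "\<alpha> < a*k" and \<delta>: "\<delta> < m*d"
    using assms by auto
  have fibre: "{j. j < inner \<and> key j = t}
      = {j. j < a*k*(r*(m*d)) \<and> j div (r*(m*d)) = \<alpha> \<and> j mod (m*d) = \<delta>}"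
    by (auto simp: key_def t)
  have "card {..<r} = card {j. j < a*k*(r*(m*d)) \<and> j div (r*(m*d)) = \<alpha> \<and> j mod (m*d) = \<delta>}"
    by (rule bij_betw_same_card[OF bij_betw_mixed_radix_digit[OF \<alpha> \<delta>]])
  then show ?thesis unfolding fibre card_lessThan by (rule sym)
qed

lemma key_eq_if_mem_support:
  assumes "j < inner" "(x,y) \<in> mat_support (rank_one_comp S1 S2 j)"
  shows "key j = (y div (c*d), x mod (m*d))"
  using assms key_eq_if_mem by (simp add: mat_support_rank_one_comp_key)

lemma mat_support_rank_one_comp_nonempty:
  assumes "j < inner"
  shows "mat_support (rank_one_comp S1 S2 j) \<noteq> {}"
  using key_rows_nonempty[OF key_in_range[OF assms]] key_cols_nonempty[OF key_in_range[OF assms]]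
  by (simp add: mat_support_rank_one_comp_key[OF assms])

lemma rank_one_comp_eq_iff:
  assumes i: "i < inner" and j: "j < inner"
  shows "rank_one_comp S1 S2 i = rank_one_comp S1 S2 j \<longleftrightarrow> key i = key j"
proof
  assume eq: "rank_one_comp S1 S2 i = rank_one_comp S1 S2 j"
  obtain x y where xy: "(x,y) \<in> mat_support (rank_one_comp S1 S2 i)"
    using mat_support_rank_one_comp_nonempty[OF i] by auto
  then show "key i = key j"
    using key_eq_if_mem_support[OF i xy] key_eq_if_mem_support[OF j xy[unfolded eq]] by simp
next
  assume "key i = key j"
  then have "S1 $$ (x,i) * S2 $$ (i,y) = S1 $$ (x,j) * S2 $$ (j,y)"
    if "x < a*b*(m*d)" "y < a*k*c*d" for x y
    using that i j by (simp only: S1_index S2_index)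
  then show "rank_one_comp S1 S2 i = rank_one_comp S1 S2 j"
    unfolding rank_one_comp_def by (intro eq_matI) simp_all
qed

lemma disjoint_comp_supports: "disjoint_comp_supports S1 S2"
  unfolding disjoint_comp_supports_def dim_col_S1
proof (intro allI impI)
  fix i j assume ij: "i < inner" "j < inner"
  assume "mat_support (rank_one_comp S1 S2 i) \<inter> mat_support (rank_one_comp S1 S2 j) \<noteq> {}"
  then obtain x y where "(x,y) \<in> mat_support (rank_one_comp S1 S2 i)"
      "(x,y) \<in> mat_support (rank_one_comp S1 S2 j)"
    by auto
  then have "key i = key j" using key_eq_if_mem_support ij by metis
  then show "rank_one_comp S1 S2 i = rank_one_comp S1 S2 j" using rank_one_comp_eq_iff[OF ij] by simp
qed

lemma card_comp_partition:
  assumes "P \<in> comp_partition S1 S2"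
  shows "card P = r"
proof -
  obtain j where j: "j < inner" and P: "P = comp_class S1 S2 j"
    using assms unfolding comp_partition_eq_image dim_col_S1 by blast
  have "comp_class S1 S2 j = {i. i < inner \<and> key i = key j}"
    unfolding comp_class_def dim_col_S1 by (rule Collect_cong) (metis rank_one_comp_eq_iff[OF j])
  then show ?thesis using card_key_fibre[OF key_in_range[OF j]] P by simp
qed

lemma star_index_iff:
  "(x div (b*m*d) = y div (k*c*d) \<and> x mod d = y mod d) \<longleftrightarrow>
    x \<in> key_rows (y div (c*d), x mod (m*d)) \<and> y \<in> key_cols (y div (c*d), x mod (m*d))"
  if "x < a*b*(m*d)" "y < a*k*c*d"
proof -
  have "x div (b*m*d) = x div (b*(m*d))" by (simp only: mult.assoc)
  moreover have "y div (k*c*d) = y div (c*d) div k" by (metis div_mult2_eq mult.commute mult.assoc)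
  moreover have "x mod (m*d) mod d = x mod d" by (simp add: mod_mod_cancel)
  ultimately show ?thesis
    unfolding key_rows_def key_cols_def mem_Collect_eq fst_conv snd_conv using that by auto
qed

lemma mat_support_star:
  "mat_support (S_pat (a, b*m, k*c, d)) = (\<Union>j<inner. mat_support (rank_one_comp S1 S2 j))"
proof (intro equalityI subsetI)
  fix z assume "z \<in> mat_support (S_pat (a, b*m, k*c, d))"
  then obtain x y where z: "z = (x,y)" and x: "x < a*b*(m*d)" and y: "y < a*k*c*d"
    and "x div (b*m*d) = y div (k*c*d) \<and> x mod d = y mod d"
    by (auto simp: mat_support_def S_pat_index ac_simps split: if_splits)
  then have xy: "x \<in> key_rows (y div (c*d), x mod (m*d))" "y \<in> key_cols (y div (c*d), x mod (m*d))"
    using star_index_iff by blast+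
  have "(y div (c*d), x mod (m*d)) \<in> {..<a*k} \<times> {..<m*d}"
    using y pos by (simp add: div_less_iff_less_mult ac_simps)
  then have "card {j. j < inner \<and> key j = (y div (c*d), x mod (m*d))} > 0"
    using card_key_fibre pos by simp
  then obtain j where j: "j < inner" and "key j = (y div (c*d), x mod (m*d))"
    by (metis (mono_tags, lifting) card_gt_0_iff ex_in_conv mem_Collect_eq)
  then have "z \<in> mat_support (rank_one_comp S1 S2 j)"
    using xy z by (simp add: mat_support_rank_one_comp_key)
  with j show "z \<in> (\<Union>j<inner. mat_support (rank_one_comp S1 S2 j))" by blast
next
  fix z assume "z \<in> (\<Union>j<inner. mat_support (rank_one_comp S1 S2 j))"
  then obtain j x y where j: "j < inner" and z: "z = (x,y)"
    and xy: "x \<in> key_rows (key j)" "y \<in> key_cols (key j)"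
    using mat_support_rank_one_comp_key by auto
  have "key j = (y div (c*d), x mod (m*d))" using xy by (rule key_eq_if_mem)
  then have xy': "x \<in> key_rows (y div (c*d), x mod (m*d))" "y \<in> key_cols (y div (c*d), x mod (m*d))"
    using xy by simp_all
  moreover have "x < a*b*(m*d)" "y < a*k*c*d"
    using xy by (simp_all add: key_rows_def key_cols_def)
  ultimately have "x div (b*m*d) = y div (k*c*d) \<and> x mod d = y mod d"
    using star_index_iff by blast
  with \<open>x < a*b*(m*d)\<close> \<open>y < a*k*c*d\<close> show "z \<in> mat_support (S_pat (a, b*m, k*c, d))"
    by (auto simp: z mat_support_def S_pat_index ac_simps)
qed

lemma butterfly_set_eq_factors_inter_M_set:
  "butterfly_set (a, b, r*k, m*d) (a*k, r*m, c, d)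
    = factors (star_pat (a, b, r*k, m*d) (a*k, r*m, c, d)) \<inter> M_set (a, b, r*k, m*d) (a*k, r*m, c, d)"
proof -
  have "b*(m*d) div d = b*m" using pos(4) by (simp only: mult.assoc[symmetric] div_mult_self_is_m)
  moreover have "a*k*c div a = k*c" using pos(1) by (simp only: mult.assoc div_mult_self1_is_m)
  ultimately have star: "star_pat (a, b, r*k, m*d) (a*k, r*m, c, d) = (a, b*m, k*c, d)"
    by (simp add: star_pat_def)
  have "a*(r*k) = r*(a*k)" by (simp only: mult_ac)
  then have rpat: "rpat (a, b, r*k, m*d) (a*k, r*m, c, d) = r"
    using pos by (simp add: rpat_def)
  have "S_pat (a, b*m, k*c, d) \<in> carrier_mat (a*b*(m*d)) (a*k*c*d)"
    by (intro carrier_matI) (simp_all only: dim_S_pat mult_ac)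
  from products_eq_supported_low_rank[OF S1_carrier S2_carrier this mat_support_star
      disjoint_comp_supports card_comp_partition]
  show ?thesis
    unfolding butterfly_set_def factors_eq_supported_mats M_set_eq_low_rank_on_classes star rpat .
qed

end

theorem lemma4p13:
  assumes "is_pattern \<pi>1" and "is_pattern \<pi>2" and "chainable \<pi>1 \<pi>2"
  shows "butterfly_set \<pi>1 \<pi>2 = factors (star_pat \<pi>1 \<pi>2) \<inter> M_set \<pi>1 \<pi>2"
proof -
  obtain a b c d k r m where pos: "0 < a" "0 < b" "0 < c" "0 < d" "0 < k" "0 < r" "0 < m"
    and \<pi>1: "\<pi>1 = (a, b, r*k, m*d)" and \<pi>2: "\<pi>2 = (a*k, r*m, c, d)"
    using chainable_normal_form[OF assms] .
  interpret chained_patterns a b c d k r m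
    using pos by (rule chained_patterns.intro)
  show ?thesis
    unfolding \<pi>1 \<pi>2 by (rule butterfly_set_eq_factors_inter_M_set)
qed

end
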